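(* Let $\hat f_{\text{PROS}}$ be the kernel density estimator based on a $\text{PROS}_{\boldsymbol{\alpha}}(n,L,s,D)$ sample of size $N=nL$ from $f$ and $\hat f_{\text{SRS}}$ the kernel density estimator based on an i.i.d. sample of size $N$ from $f$, and suppose the same bandwidth $h$ is used in both. Then, for large $N$, $$\mathrm{MISE}(\hat{f}_{\text{PROS}})=\mathrm{MISE}(\hat{f}_{\text{SRS}})-\frac1N\Delta(f,n)+O\Big(\frac{h^2}{N}\Big),\qquad \Delta(f,n)=\int\Big[\frac1n\sum_{j=1}^nf^2_{[d_j]}(x)-f^2(x)\Big]dx.$$
   Context: Let $f$ be a sufficiently smooth density with cdf $F$. Fix positive integers $s,n,L$ with $m=s/n$ an integer, and $d_j=\{(j-1)m+1,\dots,jm\}$. Let $\boldsymbol{\alpha}=(\alpha_{d_j,d_h})$ be an $n\times n$ doubly stochastic matrix of misplacement probabilities. $f_{(u:s)}(x)=\frac{s!}{(u-1)!(s-u)!}F(x)^{u-1}(1-F(x))^{s-u}f(x)$ and $f_{[d_j]}(x)=\frac1m\sum_{h=1}^n\sum_{u\in d_h}\alpha_{d_j,d_h}f_{(u:s)}(x)$. A $\text{PROS}_{\boldsymbol{\alpha}}(n,L,s,D)$ sample is a family of independent $X_{[d_j]i}$ ($j\le n$, $i\le L$) with $X_{[d_j]i}\sim f_{[d_j]}$. With $K$ a symmetric second-order kernel ($\int K=1$, $\int K^2<\infty$, $\int x^2K<\infty$): $\hat{f}_{\text{PROS}}(x)=\frac{1}{nLh}\sum_{i,j}K\big(\frac{x-X_{[d_j]i}}{h}\big)$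 and $\hat{f}_{\text{SRS}}(x)=\frac{1}{Nh}\sum_{k=1}^NK\big(\frac{x-X_k}{h}\big)$ with $X_k$ i.i.d. $\sim f$. $\mathrm{MISE}(\hat f)=\int\mathbb{E}(\hat f(x)-f(x))^2dx$. *)

theory Defs
  imports "HOL-Probability.Probability"
begin

definition cdf_of :: "(real \<Rightarrow> real) \<Rightarrow> real \<Rightarrow> real" where
  "cdf_of f x = (LINT t:{..x}|lborel. f t)"

definition ord_stat_dens :: "(real \<Rightarrow> real) \<Rightarrow> nat \<Rightarrow> nat \<Rightarrow> real \<Rightarrow> real" where
  "ord_stat_dens f s u x =
     fact s / (fact (u - 1) * fact (s - u)) * (cdf_of f x) ^ (u - 1)
       * (1 - cdf_of f x) ^ (s - u) * f x"

definition dblock :: "nat \<Rightarrow> nat \<Rightarrow> nat \<Rightarrow> nat set" where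
  "dblock s n j = {(j - 1) * (s div n) + 1 .. j * (s div n)}"

text \<open>Density f_[d_j] of a PROS observation from set j, with misplacement
  probabilities alpha j h (j, h in 1..n).\<close>
definition pros_dens ::
  "(real \<Rightarrow> real) \<Rightarrow> nat \<Rightarrow> nat \<Rightarrow> (nat \<Rightarrow> nat \<Rightarrow> real) \<Rightarrow> nat \<Rightarrow> real \<Rightarrow> real" where
  "pros_dens f s n \<alpha> j x =
     (1 / real (s div n)) * (\<Sum>h\<in>{1..n}. \<Sum>u\<in>dblock s n h. \<alpha> j h * ord_stat_dens f s u x)"

definition doubly_stochastic :: "nat \<Rightarrow> (nat \<Rightarrow> nat \<Rightarrow> real) \<Rightarrow> bool" where
  "doubly_stochastic n \<alpha> \<longleftrightarrow>
     (\<forall>j\<in>{1..n}. \<forall>h\<in>{1..n}. 0 \<le> \<alpha> j h) \<and>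
     (\<forall>j\<in>{1..n}. (\<Sum>h\<in>{1..n}. \<alpha> j h) = 1) \<and>
     (\<forall>h\<in>{1..n}. (\<Sum>j\<in>{1..n}. \<alpha> j h) = 1)"

definition pros_sample_measure ::
  "(real \<Rightarrow> real) \<Rightarrow> nat \<Rightarrow> nat \<Rightarrow> nat \<Rightarrow> (nat \<Rightarrow> nat \<Rightarrow> real) \<Rightarrow> ((nat \<times> nat) \<Rightarrow> real) measure" where
  "pros_sample_measure f s n L \<alpha> =
     PiM ({1..n} \<times> {1..L}) (\<lambda>(j, i). density lborel (\<lambda>x. ennreal (pros_dens f s n \<alpha> j x)))"

definition srs_sample_measure :: "(real \<Rightarrow> real) \<Rightarrow> nat \<Rightarrow> (nat \<Rightarrow> real) measure" where
  "srs_sample_measure f N = PiM {1..N} (\<lambda>_. density lborel (\<lambda>x. ennreal (f x)))"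

definition kde_pros ::
  "(real \<Rightarrow> real) \<Rightarrow> nat \<Rightarrow> nat \<Rightarrow> real \<Rightarrow> ((nat \<times> nat) \<Rightarrow> real) \<Rightarrow> real \<Rightarrow> real" where
  "kde_pros K n L h X x =
     (1 / (real n * real L * h)) * (\<Sum>j\<in>{1..n}. \<Sum>i\<in>{1..L}. K ((x - X (j, i)) / h))"

definition kde_srs :: "(real \<Rightarrow> real) \<Rightarrow> nat \<Rightarrow> real \<Rightarrow> (nat \<Rightarrow> real) \<Rightarrow> real \<Rightarrow> real" where
  "kde_srs K N h X x = (1 / (real N * h)) * (\<Sum>k\<in>{1..N}. K ((x - X k) / h))"

definition MISE_pros ::
  "(real \<Rightarrow> real) \<Rightarrow> (real \<Rightarrow> real) \<Rightarrow> nat \<Rightarrow> nat \<Rightarrow> nat \<Rightarrow> (nat \<Rightarrow> nat \<Rightarrow> real) \<Rightarrow> real \<Rightarrow> real" where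
  "MISE_pros f K s n L \<alpha> h =
     (LINT x|lborel. (LINT X|pros_sample_measure f s n L \<alpha>. (kde_pros K n L h X x - f x)\<^sup>2))"

definition MISE_srs :: "(real \<Rightarrow> real) \<Rightarrow> (real \<Rightarrow> real) \<Rightarrow> nat \<Rightarrow> real \<Rightarrow> real" where
  "MISE_srs f K N h =
     (LINT x|lborel. (LINT X|srs_sample_measure f N. (kde_srs K N h X x - f x)\<^sup>2))"

definition Delta_pros :: "(real \<Rightarrow> real) \<Rightarrow> nat \<Rightarrow> nat \<Rightarrow> (nat \<Rightarrow> nat \<Rightarrow> real) \<Rightarrow> real" where
  "Delta_pros f s n \<alpha> =
     (LINT x|lborel. (1 / real n) * (\<Sum>j\<in>{1..n}. (pros_dens f s n \<alpha> j x)\<^sup>2) - (f x)\<^sup>2)"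

end

theory Submission
  imports Defs
begin

text \<open>Both MISEs are integrals of pointwise mean squared errors, which the bias--variance
  decomposition over independent observations expresses exactly through the kernel smoothings
  \<open>K\<^sub>h * g\<close> of the observation densities. Because \<open>\<alpha>\<close> is doubly stochastic, the PROS densities
  \<open>f\<^sub>[\<^sub>d\<^sub>j\<^sub>]\<close> average to \<open>f\<close>, so the squared bias and the leading variance term are the same for
  both designs and the MISEs differ by
  \<open>(\<integral>(K\<^sub>h * f)\<^sup>2 - (1/n) \<Sum>\<^sub>j \<integral>(K\<^sub>h * f\<^sub>[\<^sub>d\<^sub>j\<^sub>])\<^sup>2) / N\<close>. A second-order Taylor expansion, whose first-order
  term vanishes by the symmetry of \<open>K\<close>, gives \<open>\<integral>(K\<^sub>h * g)\<^sup>2 = \<integral>g\<^sup>2 + O(h\<^sup>2)\<close> for integrable \<open>g\<close>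
  with bounded derivatives up to order two; this turns the difference into \<open>-\<Delta>(f,n)/N + O(h\<^sup>2/N)\<close>.\<close>

section \<open>Sums of independent coordinates\<close>

lemma PiM_integral_component:
  fixes g :: "'a \<Rightarrow> real"
  assumes "product_sigma_finite M" and "finite I" and "i \<in> I"
    and prob: "\<And>l. l \<in> I \<Longrightarrow> prob_space (M l)"
    and g: "integrable (M i) g"
  shows "integrable (PiM I M) (\<lambda>X. g (X i))"
    and "(\<integral>X. g (X i) \<partial>PiM I M) = (\<integral>x. g x \<partial>M i)"
proof -
  interpret product_sigma_finite M by fact
  define G where "G l = (if l = i then g else (\<lambda>_. 1))" for l
  have "integrable (M l) (G l)" if "l \<in> I" for l
    using g prob[OF that] by (simp add: G_def prob_space_def finite_measure.integrable_const)
  moreover have "(\<Prod>l\<in>I. G l (X l)) = g (X i)" for X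
    using \<open>finite I\<close> \<open>i \<in> I\<close> by (simp add: G_def prod.remove)
  moreover have "(\<Prod>l\<in>I. integral\<^sup>L (M l) (G l)) = integral\<^sup>L (M i) g"
    using \<open>finite I\<close> \<open>i \<in> I\<close> prob by (simp add: G_def prod.remove prob_space.prob_space)
  ultimately show "integrable (PiM I M) (\<lambda>X. g (X i))" "(\<integral>X. g (X i) \<partial>PiM I M) = (\<integral>x. g x \<partial>M i)"
    using product_integrable_prod[OF \<open>finite I\<close>, of G] product_integral_prod[OF \<open>finite I\<close>, of G]
    by simp_all
qed

lemma PiM_integral_two_components:
  fixes g g' :: "'a \<Rightarrow> real"
  assumes "product_sigma_finite M" and "finite I" and "i \<in> I" and "k \<in> I" and "i \<noteq> k"
    and prob: "\<And>l. l \<in> I \<Longrightarrow> prob_space (M l)"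
    and g: "integrable (M i) g" and g': "integrable (M k) g'"
  shows "integrable (PiM I M) (\<lambda>X. g (X i) * g' (X k))"
    and "(\<integral>X. g (X i) * g' (X k) \<partial>PiM I M) = (\<integral>x. g x \<partial>M i) * (\<integral>x. g' x \<partial>M k)"
proof -
  interpret product_sigma_finite M by fact
  define G where "G l = (if l = i then g else if l = k then g' else (\<lambda>_. 1))" for l
  have k: "k \<in> I - {i}" using assms by auto
  have "integrable (M l) (G l)" if "l \<in> I" for l
    using g g' prob[OF that] by (simp add: G_def prob_space_def finite_measure.integrable_const)
  moreover have "(\<Prod>l\<in>I. G l (X l)) = g (X i) * g' (X k)" for X
    using assms by (simp add: G_def prod.remove[OF _ \<open>i \<in> I\<close>] prod.remove[OF _ k])
  moreover have "(\<Prod>l\<in>I. integral\<^sup>L (M l) (G l)) = integral\<^sup>L (M i) g * integral\<^sup>L (M k) g'"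
    using assms by (simp add: G_def prod.remove[OF _ \<open>i \<in> I\<close>] prod.remove[OF _ k] prob_space.prob_space)
  ultimately show "integrable (PiM I M) (\<lambda>X. g (X i) * g' (X k))"
    "(\<integral>X. g (X i) * g' (X k) \<partial>PiM I M) = (\<integral>x. g x \<partial>M i) * (\<integral>x. g' x \<partial>M k)"
    using product_integrable_prod[OF \<open>finite I\<close>, of G] product_integral_prod[OF \<open>finite I\<close>, of G]
    by simp_all
qed

lemma PiM_integral_square_sum:
  fixes \<phi> :: "'i \<Rightarrow> 'a \<Rightarrow> real"
  assumes ps: "product_sigma_finite M" and fin: "finite I"
    and prob: "\<And>l. l \<in> I \<Longrightarrow> prob_space (M l)"
    and int1: "\<And>l. l \<in> I \<Longrightarrow> integrable (M l) (\<phi> l)"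
    and int2: "\<And>l. l \<in> I \<Longrightarrow> integrable (M l) (\<lambda>x. (\<phi> l x)\<^sup>2)"
  shows "(\<integral>X. (c + (\<Sum>l\<in>I. \<phi> l (X l)))\<^sup>2 \<partial>PiM I M) =
     (c + (\<Sum>l\<in>I. \<integral>x. \<phi> l x \<partial>M l))\<^sup>2 + (\<Sum>l\<in>I. (\<integral>x. (\<phi> l x)\<^sup>2 \<partial>M l) - (\<integral>x. \<phi> l x \<partial>M l)\<^sup>2)"
proof -
  define \<mu> where "\<mu> l = (\<integral>x. \<phi> l x \<partial>M l)" for l
  define v where "v l = (\<integral>x. (\<phi> l x)\<^sup>2 \<partial>M l)" for l
  have "prob_space (PiM I M)"
    using prob by (intro prob_space_PiM) auto
  then have const: "integrable (PiM I M) (\<lambda>X. c\<^sup>2)" "(\<integral>X. c\<^sup>2 \<partial>PiM I M) = c\<^sup>2"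
    by (simp_all add: prob_space_def finite_measure.integrable_const prob_space.prob_space)
  note single = PiM_integral_component[OF ps fin _ prob int1]
  have pair: "integrable (PiM I M) (\<lambda>X. \<phi> l (X l) * \<phi> k (X k)) \<and>
      (\<integral>X. \<phi> l (X l) * \<phi> k (X k) \<partial>PiM I M) = (if l = k then v l else \<mu> l * \<mu> k)"
    if "l \<in> I" "k \<in> I" for l k
  proof (cases "l = k")
    case True
    then show ?thesis
      using PiM_integral_component[OF ps fin \<open>l \<in> I\<close> prob int2[OF \<open>l \<in> I\<close>]]
      by (simp add: power2_eq_square v_def)
  next
    case False
    then show ?thesis
      using PiM_integral_two_components[OF ps fin that False prob int1[OF \<open>l \<in> I\<close>] int1[OF \<open>k \<in> I\<close>]]
      by (simp add: \<mu>_def)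
  qed
  have expand: "(c + (\<Sum>l\<in>I. \<phi> l (X l)))\<^sup>2 =
      c\<^sup>2 + (\<Sum>l\<in>I. 2 * c * \<phi> l (X l)) + (\<Sum>l\<in>I. \<Sum>k\<in>I. \<phi> l (X l) * \<phi> k (X k))" for X
    by (simp add: power2_eq_square algebra_simps sum_distrib_left sum_product)
  have "(\<integral>X. (c + (\<Sum>l\<in>I. \<phi> l (X l)))\<^sup>2 \<partial>PiM I M) =
      c\<^sup>2 + (\<Sum>l\<in>I. 2 * c * \<mu> l) + (\<Sum>l\<in>I. \<Sum>k\<in>I. if l = k then v l else \<mu> l * \<mu> k)"
    unfolding expand using const single pair
    by (simp add: integrable_add Bochner_Integration.integrable_sum Bochner_Integration.integral_sum
        \<mu>_def cong: sum.cong)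
  also have "(\<Sum>l\<in>I. \<Sum>k\<in>I. if l = k then v l else \<mu> l * \<mu> k) =
      (\<Sum>l\<in>I. \<Sum>k\<in>I. \<mu> l * \<mu> k + (if l = k then v l - (\<mu> l)\<^sup>2 else 0))"
    by (intro sum.cong) (auto simp: power2_eq_square)
  also have "\<dots> = (\<Sum>l\<in>I. \<Sum>k\<in>I. \<mu> l * \<mu> k) + (\<Sum>l\<in>I. v l - (\<mu> l)\<^sup>2)"
    using fin by (simp only: sum.distrib) (simp add: sum.delta)
  finally show ?thesis
    unfolding \<mu>_def[symmetric] v_def[symmetric]
    by (simp add: power2_eq_square algebra_simps sum_distrib_left sum_product)
qed

section \<open>Kernel smoothing\<close>

text \<open>\<open>kernel_smooth K h g x\<close> is \<open>(K\<^sub>h * g)(x)\<close> with \<open>K\<^sub>h u = K (u/h) / h\<close>, after the substitution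
  \<open>u = h t\<close>; for \<open>h > 0\<close> it is the mean of \<open>K\<^sub>h (x - Y)\<close> when \<open>Y\<close> has density \<open>g\<close>.\<close>
definition kernel_smooth :: "(real \<Rightarrow> real) \<Rightarrow> real \<Rightarrow> (real \<Rightarrow> real) \<Rightarrow> real \<Rightarrow> real" where
  "kernel_smooth K h g x = (LINT t|lborel. K t * g (x - h * t))"

lemma integrable_mult_bounded:
  fixes Q g :: "real \<Rightarrow> real"
  assumes Q: "integrable lborel Q" and g: "g \<in> borel_measurable borel" and B: "\<And>y. \<bar>g y\<bar> \<le> B"
  shows "integrable lborel (\<lambda>t. Q t * g t)"
proof (rule Bochner_Integration.integrable_bound[OF integrable_mult_right[OF integrable_abs[OF Q], of B]])
  show "(\<lambda>t. Q t * g t) \<in> borel_measurable lborel" using Q g by auto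
  have "\<bar>Q t\<bar> * \<bar>g t\<bar> \<le> \<bar>Q t\<bar> * \<bar>B\<bar>" for t
    using B[of t] by (intro mult_left_mono) auto
  then show "AE t in lborel. norm (Q t * g t) \<le> norm (B * \<bar>Q t\<bar>)"
    by (simp add: abs_mult mult.commute)
qed

lemma integrable_square_bounded:
  fixes g :: "real \<Rightarrow> real"
  assumes "integrable lborel g" and "\<And>x. \<bar>g x\<bar> \<le> B"
  shows "integrable lborel (\<lambda>x. (g x)\<^sup>2)"
  using integrable_mult_bounded[OF assms(1) _ assms(2)] assms(1) by (simp add: power2_eq_square)

lemma integrable_kernel_smooth_integrand:
  fixes K g :: "real \<Rightarrow> real"
  assumes "integrable lborel K" and "g \<in> borel_measurable borel" and "\<And>y. \<bar>g y\<bar> \<le> B"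
  shows "integrable lborel (\<lambda>t. K t * g (x - h * t))"
  by (rule integrable_mult_bounded[OF assms(1) _ assms(3)]) (use assms(2) in measurable)

lemma abs_kernel_smooth_le:
  fixes K g :: "real \<Rightarrow> real"
  assumes K: "integrable lborel K" and g: "g \<in> borel_measurable borel" and B: "\<And>y. \<bar>g y\<bar> \<le> B"
  shows "\<bar>kernel_smooth K h g x\<bar> \<le> B * (LINT t|lborel. \<bar>K t\<bar>)"
proof -
  have "\<bar>kernel_smooth K h g x\<bar> \<le> (LINT t|lborel. \<bar>K t * g (x - h * t)\<bar>)"
    unfolding kernel_smooth_def by (rule integral_abs_bound)
  also have "\<dots> \<le> (LINT t|lborel. B * \<bar>K t\<bar>)"
  proof (rule integral_mono)
    show "integrable lborel (\<lambda>t. \<bar>K t * g (x - h * t)\<bar>)"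
      using integrable_kernel_smooth_integrand[OF K g B] by (rule integrable_abs)
    fix t
    have "\<bar>K t\<bar> * \<bar>g (x - h * t)\<bar> \<le> \<bar>K t\<bar> * B"
      by (rule mult_left_mono[OF B]) simp
    then show "\<bar>K t * g (x - h * t)\<bar> \<le> B * \<bar>K t\<bar>"
      by (metis abs_mult mult.commute)
  qed (use K in simp)
  finally show ?thesis by simp
qed

text \<open>Young's inequality in \<open>L\<^sup>1\<close>, via Fubini and translation invariance of Lebesgue measure.\<close>
lemma integrable_kernel_smooth:
  fixes K g :: "real \<Rightarrow> real"
  assumes K: "integrable lborel K" and g: "integrable lborel g"
  shows "integrable lborel (kernel_smooth K h g)"
    and "(LINT x|lborel. \<bar>kernel_smooth K h g x\<bar>) \<le> (LINT t|lborel. \<bar>K t\<bar>) * (LINT y|lborel. \<bar>g y\<bar>)"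
proof -
  have [measurable]: "K \<in> borel_measurable borel" "g \<in> borel_measurable borel"
    using K g by auto
  define F where "F = (\<lambda>(t::real, x::real). K t * g (x - h * t))"
  have [measurable]: "F \<in> borel_measurable (lborel \<Otimes>\<^sub>M lborel)"
    unfolding F_def by measurable
  have shift: "(LINT x|lborel. G (x - h * t)) = (LINT y|lborel. G y)" for G :: "real \<Rightarrow> real" and t
    using lborel_integral_real_affine[of 1 G "- h * t"] by simp
  have inner: "(LINT x|lborel. norm (F (t, x))) = \<bar>K t\<bar> * (LINT y|lborel. \<bar>g y\<bar>)" for t
    unfolding F_def by (simp add: abs_mult shift[of "\<lambda>y. \<bar>g y\<bar>"])
  have "integrable (lborel \<Otimes>\<^sub>M lborel) F"
  proof (rule lborel_pair.Fubini_integrable)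
    show "integrable lborel (\<lambda>t. LINT x|lborel. norm (F (t, x)))"
      unfolding inner by (intro integrable_mult_left integrable_abs K)
    have "integrable lborel (\<lambda>x. K t * g (x - h * t))" for t
      using lborel_integrable_real_affine[OF g, of 1 "- h * t"] by simp
    then show "AE t in lborel. integrable lborel (\<lambda>x. F (t, x))"
      by (simp add: F_def)
  qed simp
  then have F: "integrable (lborel \<Otimes>\<^sub>M lborel) (\<lambda>(t, x). K t * g (x - h * t))"
    and Fabs: "integrable (lborel \<Otimes>\<^sub>M lborel) (\<lambda>(t, x). \<bar>K t * g (x - h * t)\<bar>)"
    using integrable_abs[of _ F] by (simp_all add: F_def case_prod_unfold)
  show int: "integrable lborel (kernel_smooth K h g)"
    using lborel_pair.integrable_snd[OF F] by (simp add: kernel_smooth_def[abs_def])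
  have "(LINT x|lborel. \<bar>kernel_smooth K h g x\<bar>) \<le> (LINT x|lborel. (LINT t|lborel. \<bar>K t * g (x - h * t)\<bar>))"
  proof (rule integral_mono)
    show "integrable lborel (\<lambda>x. \<bar>kernel_smooth K h g x\<bar>)"
      using int by (rule integrable_abs)
    show "integrable lborel (\<lambda>x. LINT t|lborel. \<bar>K t * g (x - h * t)\<bar>)"
      using lborel_pair.integrable_snd[OF Fabs] by simp
    show "\<bar>kernel_smooth K h g x\<bar> \<le> (LINT t|lborel. \<bar>K t * g (x - h * t)\<bar>)" for x
      unfolding kernel_smooth_def by (rule integral_abs_bound)
  qed
  also have "\<dots> = (LINT t|lborel. (LINT x|lborel. \<bar>K t * g (x - h * t)\<bar>))"
    using lborel_pair.integral_snd[OF Fabs] lborel_pair.integral_fst[OF Fabs] by simp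
  also have "\<dots> = (LINT t|lborel. \<bar>K t\<bar>) * (LINT y|lborel. \<bar>g y\<bar>)"
    using inner by (simp add: F_def)
  finally show "(LINT x|lborel. \<bar>kernel_smooth K h g x\<bar>) \<le> (LINT t|lborel. \<bar>K t\<bar>) * (LINT y|lborel. \<bar>g y\<bar>)" .
qed

lemma integral_kernel_density:
  fixes K g :: "real \<Rightarrow> real"
  assumes K: "integrable lborel K" and g: "g \<in> borel_measurable borel" and B: "\<And>y. \<bar>g y\<bar> \<le> B"
    and g_nonneg: "\<And>y. 0 \<le> g y" and h: "0 < h"
  shows "integrable (density lborel (\<lambda>y. ennreal (g y))) (\<lambda>y. K ((x - y) / h))"
    and "(\<integral>y. K ((x - y) / h) \<partial>density lborel (\<lambda>y. ennreal (g y))) = h * kernel_smooth K h g x"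
proof -
  have [measurable]: "K \<in> borel_measurable borel" using K by auto
  note g[measurable]
  have subst: "(\<lambda>t. g (x + - h * t) * K ((x - (x + - h * t)) / h)) = (\<lambda>t. K t * g (x - h * t))"
    using h by (auto simp: fun_eq_iff)
  have "integrable lborel (\<lambda>y. g y * K ((x - y) / h))"
    using lborel_integrable_real_affine_iff[of "- h" "\<lambda>y. g y * K ((x - y) / h)" x] h
      integrable_kernel_smooth_integrand[OF K g B, of x h]
    unfolding subst by simp
  then show "integrable (density lborel (\<lambda>y. ennreal (g y))) (\<lambda>y. K ((x - y) / h))"
    using g_nonneg by (subst integrable_density) auto
  have "(\<integral>y. K ((x - y) / h) \<partial>density lborel (\<lambda>y. ennreal (g y))) = (LINT y|lborel. g y * K ((x - y) / h))"
    using g_nonneg by (subst integral_density) auto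
  also have "\<dots> = \<bar>- h\<bar> * (LINT t|lborel. g (x + - h * t) * K ((x - (x + - h * t)) / h))"
    using lborel_integral_real_affine[of "- h" "\<lambda>y. g y * K ((x - y) / h)" x] h by simp
  also have "\<dots> = h * kernel_smooth K h g x"
    unfolding subst kernel_smooth_def using h by simp
  finally show "(\<integral>y. K ((x - y) / h) \<partial>density lborel (\<lambda>y. ennreal (g y))) = h * kernel_smooth K h g x" .
qed

lemma kernel_smooth_sum:
  assumes "finite A" and "\<And>j. j \<in> A \<Longrightarrow> integrable lborel (\<lambda>t. K t * g j (x - h * t))"
  shows "kernel_smooth K h (\<lambda>y. \<Sum>j\<in>A. g j y) x = (\<Sum>j\<in>A. kernel_smooth K h (g j) x)"
  unfolding kernel_smooth_def using assms by (simp add: sum_distrib_left Bochner_Integration.integral_sum)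

lemma kernel_smooth_cmult: "kernel_smooth K h (\<lambda>y. c * g y) x = c * kernel_smooth K h g x"
  unfolding kernel_smooth_def by (simp add: mult.left_commute)

section \<open>Second-order bias of kernel smoothing\<close>

definition bounded_C2 :: "(real \<Rightarrow> real) \<Rightarrow> bool" where
  "bounded_C2 g \<longleftrightarrow> (\<exists>g' g'' B. (\<forall>x. (g has_real_derivative g' x) (at x)) \<and>
     (\<forall>x. (g' has_real_derivative g'' x) (at x)) \<and> (\<forall>x. \<bar>g x\<bar> \<le> B \<and> \<bar>g' x\<bar> \<le> B \<and> \<bar>g'' x\<bar> \<le> B))"

lemma bounded_C2E:
  assumes "bounded_C2 g"
  obtains g' g'' B where "\<And>x. (g has_real_derivative g' x) (at x)"
    "\<And>x. (g' has_real_derivative g'' x) (at x)"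
    "\<And>x. \<bar>g x\<bar> \<le> B" "\<And>x. \<bar>g' x\<bar> \<le> B" "\<And>x. \<bar>g'' x\<bar> \<le> B" "0 \<le> B"
proof -
  obtain g' g'' B where "\<forall>x. (g has_real_derivative g' x) (at x)" "\<forall>x. (g' has_real_derivative g'' x) (at x)"
    "\<forall>x. \<bar>g x\<bar> \<le> B \<and> \<bar>g' x\<bar> \<le> B \<and> \<bar>g'' x\<bar> \<le> B"
    using assms unfolding bounded_C2_def by blast
  moreover from this(3) have "0 \<le> B" by (meson abs_ge_zero order_trans)
  ultimately show ?thesis using that by blast
qed

lemma bounded_C2I:
  assumes "\<And>x. (g has_real_derivative g' x) (at x)" "\<And>x. (g' has_real_derivative g'' x) (at x)"
    and "bounded (range g)" "bounded (range g')" "bounded (range g'')"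
  shows "bounded_C2 g"
proof -
  obtain B1 B2 B3 where "\<And>x. \<bar>g x\<bar> \<le> B1" "\<And>x. \<bar>g' x\<bar> \<le> B2" "\<And>x. \<bar>g'' x\<bar> \<le> B3"
    using assms(3-5) by (auto simp: bounded_iff)
  then have "\<forall>x. \<bar>g x\<bar> \<le> \<bar>B1\<bar> + \<bar>B2\<bar> + \<bar>B3\<bar> \<and> \<bar>g' x\<bar> \<le> \<bar>B1\<bar> + \<bar>B2\<bar> + \<bar>B3\<bar> \<and> \<bar>g'' x\<bar> \<le> \<bar>B1\<bar> + \<bar>B2\<bar> + \<bar>B3\<bar>"
    by (smt (verit))
  then show ?thesis
    unfolding bounded_C2_def using assms(1,2) by blast
qed

lemma bounded_C2_const: "bounded_C2 (\<lambda>x. c)"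
  unfolding bounded_C2_def by (intro exI[of _ "\<lambda>_. 0"] exI[of _ "\<bar>c\<bar>"]) auto

lemma bounded_C2_add:
  assumes "bounded_C2 g" "bounded_C2 k"
  shows "bounded_C2 (\<lambda>x. g x + k x)"
proof -
  obtain g' g'' B where g: "\<And>x. (g has_real_derivative g' x) (at x)" "\<And>x. (g' has_real_derivative g'' x) (at x)"
    "\<And>x. \<bar>g x\<bar> \<le> B" "\<And>x. \<bar>g' x\<bar> \<le> B" "\<And>x. \<bar>g'' x\<bar> \<le> B"
    using assms(1) by (rule bounded_C2E) blast
  obtain k' k'' C where k: "\<And>x. (k has_real_derivative k' x) (at x)" "\<And>x. (k' has_real_derivative k'' x) (at x)"
    "\<And>x. \<bar>k x\<bar> \<le> C" "\<And>x. \<bar>k' x\<bar> \<le> C" "\<And>x. \<bar>k'' x\<bar> \<le> C"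
    using assms(2) by (rule bounded_C2E) blast
  show ?thesis unfolding bounded_C2_def
  proof (intro exI conjI allI)
    fix x
    show "((\<lambda>x. g x + k x) has_real_derivative g' x + k' x) (at x)"
      "((\<lambda>x. g' x + k' x) has_real_derivative g'' x + k'' x) (at x)"
      using g k by (auto intro!: derivative_eq_intros)
    show "\<bar>g x + k x\<bar> \<le> B + C" "\<bar>g' x + k' x\<bar> \<le> B + C" "\<bar>g'' x + k'' x\<bar> \<le> B + C"
      using g(3-5)[of x] k(3-5)[of x] by linarith+
  qed
qed

lemma bounded_C2_mult:
  assumes "bounded_C2 g" "bounded_C2 k"
  shows "bounded_C2 (\<lambda>x. g x * k x)"
proof -
  obtain g' g'' B where g: "\<And>x. (g has_real_derivative g' x) (at x)" "\<And>x. (g' has_real_derivative g'' x) (at x)"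
    "\<And>x. \<bar>g x\<bar> \<le> B" "\<And>x. \<bar>g' x\<bar> \<le> B" "\<And>x. \<bar>g'' x\<bar> \<le> B" "0 \<le> B"
    using assms(1) by (rule bounded_C2E) blast
  obtain k' k'' C where k: "\<And>x. (k has_real_derivative k' x) (at x)" "\<And>x. (k' has_real_derivative k'' x) (at x)"
    "\<And>x. \<bar>k x\<bar> \<le> C" "\<And>x. \<bar>k' x\<bar> \<le> C" "\<And>x. \<bar>k'' x\<bar> \<le> C" "0 \<le> C"
    using assms(2) by (rule bounded_C2E) blast
  have prod: "\<bar>a * b\<bar> \<le> B * C" "\<bar>b * a\<bar> \<le> B * C" if "\<bar>a\<bar> \<le> B" "\<bar>b\<bar> \<le> C" for a b
    using that g(6) k(6) by (simp_all add: abs_mult mult_mono mult.commute[of b])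
  show ?thesis unfolding bounded_C2_def
  proof (intro exI conjI allI)
    fix x
    show "((\<lambda>x. g x * k x) has_real_derivative g' x * k x + k' x * g x) (at x)"
      by (intro DERIV_mult g k)
    show "((\<lambda>x. g' x * k x + k' x * g x) has_real_derivative
        (g'' x * k x + k' x * g' x) + (k'' x * g x + g' x * k' x)) (at x)"
      by (intro DERIV_add DERIV_mult g k)
    have "0 \<le> B * C" using g(6) k(6) by simp
    then show "\<bar>g x * k x\<bar> \<le> 4 * B * C"
      using prod(1)[OF g(3)[of x] k(3)[of x]] by linarith
    show "\<bar>g' x * k x + k' x * g x\<bar> \<le> 4 * B * C"
      using \<open>0 \<le> B * C\<close> prod(1)[OF g(4)[of x] k(3)[of x]] prod(2)[OF g(3)[of x] k(4)[of x]]
        abs_triangle_ineq[of "g' x * k x" "k' x * g x"] by linarith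
    show "\<bar>(g'' x * k x + k' x * g' x) + (k'' x * g x + g' x * k' x)\<bar> \<le> 4 * B * C"
      using prod(1)[OF g(5)[of x] k(3)[of x]] prod(2)[OF g(4)[of x] k(4)[of x]]
        prod(2)[OF g(3)[of x] k(5)[of x]] prod(1)[OF g(4)[of x] k(4)[of x]]
        abs_triangle_ineq[of "g'' x * k x + k' x * g' x" "k'' x * g x + g' x * k' x"]
        abs_triangle_ineq[of "g'' x * k x" "k' x * g' x"] abs_triangle_ineq[of "k'' x * g x" "g' x * k' x"]
      by linarith
  qed
qed

lemma bounded_C2_sum: "finite A \<Longrightarrow> (\<And>i. i \<in> A \<Longrightarrow> bounded_C2 (g i)) \<Longrightarrow> bounded_C2 (\<lambda>x. \<Sum>i\<in>A. g i x)"
  by (induction A rule: finite_induct) (auto intro: bounded_C2_add bounded_C2_const)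

lemma bounded_C2_power: "bounded_C2 g \<Longrightarrow> bounded_C2 (\<lambda>x. (g x) ^ k)"
  by (induction k) (auto intro: bounded_C2_mult bounded_C2_const)

lemma bounded_C2_measurable: "bounded_C2 g \<Longrightarrow> g \<in> borel_measurable borel"
  by (erule bounded_C2E)
    (meson DERIV_isCont borel_measurable_continuous_onI continuous_at_imp_continuous_on)

lemma mvt_abs_le:
  fixes g g' :: "real \<Rightarrow> real"
  assumes "\<And>x. (g has_real_derivative g' x) (at x)"
  shows "\<exists>z. \<bar>z - x\<bar> \<le> \<bar>t\<bar> \<and> g (x + t) - g x = t * g' z"
proof -
  consider "t = 0" | "x < x + t" | "x + t < x" by linarith
  then show ?thesis
  proof cases
    case 2
    then obtain z where "x < z" "z < x + t" "g (x + t) - g x = (x + t - x) * g' z"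
      using MVT2[of x "x + t" g g'] assms by blast
    then show ?thesis by (intro exI[of _ z]) auto
  next
    case 3
    then obtain z where "x + t < z" "z < x" "g x - g (x + t) = (x - (x + t)) * g' z"
      using MVT2[of "x + t" x g g'] assms by blast
    then show ?thesis by (intro exI[of _ z]) (auto simp: algebra_simps)
  qed (intro exI[of _ x], simp)
qed

lemma taylor_second_order_abs_le:
  fixes g g' g'' :: "real \<Rightarrow> real"
  assumes d1: "\<And>x. (g has_real_derivative g' x) (at x)" and d2: "\<And>x. (g' has_real_derivative g'' x) (at x)"
    and B: "\<And>x. \<bar>g'' x\<bar> \<le> B"
  shows "\<bar>g (x + t) - g x - t * g' x\<bar> \<le> B * t\<^sup>2"
proof -
  obtain z where z: "\<bar>z - x\<bar> \<le> \<bar>t\<bar>" "g (x + t) - g x = t * g' z"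
    using mvt_abs_le[OF d1] by blast
  obtain w where "g' (x + (z - x)) - g' x = (z - x) * g'' w"
    using mvt_abs_le[OF d2] by blast
  then have "g' z - g' x = (z - x) * g'' w" by simp
  moreover have "g (x + t) - g x - t * g' x = t * (g' z - g' x)"
    using z(2) by (simp add: algebra_simps)
  ultimately have "g (x + t) - g x - t * g' x = t * (z - x) * g'' w"
    by simp
  then have "\<bar>g (x + t) - g x - t * g' x\<bar> = \<bar>t\<bar> * \<bar>z - x\<bar> * \<bar>g'' w\<bar>"
    by (simp add: abs_mult)
  also have "\<dots> \<le> \<bar>t\<bar> * \<bar>t\<bar> * B"
    using z(1) B[of w] by (intro mult_mono) (auto intro: mult_left_mono)
  finally show ?thesis by (simp add: power2_eq_square mult.commute)
qed

lemma integral_odd_moment_zero: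
  fixes K :: "real \<Rightarrow> real"
  assumes "\<And>x. K (- x) = K x"
  shows "(LINT t|lborel. t * K t) = 0"
proof -
  have "(LINT t|lborel. t * K t) = \<bar>-1\<bar> *\<^sub>R (LINT t|lborel. (0 + -1 * t) * K (0 + -1 * t))"
    by (rule lborel_integral_real_affine) simp
  also have "\<dots> = - (LINT t|lborel. t * K t)" using assms by simp
  finally show ?thesis by simp
qed

lemma integrable_first_moment:
  fixes K :: "real \<Rightarrow> real"
  assumes K: "integrable lborel K" and K2: "integrable lborel (\<lambda>x. x\<^sup>2 * K x)"
  shows "integrable lborel (\<lambda>t. t * K t)"
proof (rule Bochner_Integration.integrable_bound[OF Bochner_Integration.integrable_add[OF integrable_abs[OF K] integrable_abs[OF K2]]])
  show "(\<lambda>t. t * K t) \<in> borel_measurable lborel" using K by measurable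
  have "\<bar>t\<bar> \<le> 1 + t\<^sup>2" for t :: real
  proof -
    have "0 \<le> (\<bar>t\<bar> - 1)\<^sup>2" by simp
    then show ?thesis by (simp add: power2_diff power2_abs)
  qed
  then have "\<bar>t\<bar> * \<bar>K t\<bar> \<le> (1 + t\<^sup>2) * \<bar>K t\<bar>" for t
    by (intro mult_right_mono) auto
  then show "AE t in lborel. norm (t * K t) \<le> norm (\<bar>K t\<bar> + \<bar>t\<^sup>2 * K t\<bar>)"
    by (simp add: abs_mult algebra_simps)
qed

text \<open>The first-order Taylor term integrates to zero by the symmetry of \<open>K\<close>.\<close>
lemma abs_kernel_smooth_diff_le:
  fixes K g g' g'' :: "real \<Rightarrow> real"
  assumes K_sym: "\<And>x. K (- x) = K x"
    and K_int: "integrable lborel K" and K_one: "(LINT x|lborel. K x) = 1"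
    and K_mom2: "integrable lborel (\<lambda>x. x\<^sup>2 * K x)"
    and d1: "\<And>x. (g has_real_derivative g' x) (at x)" and d2: "\<And>x. (g' has_real_derivative g'' x) (at x)"
    and B0: "\<And>x. \<bar>g x\<bar> \<le> B" and B2: "\<And>x. \<bar>g'' x\<bar> \<le> B"
  shows "\<bar>kernel_smooth K h g x - g x\<bar> \<le> B * (LINT t|lborel. \<bar>t\<^sup>2 * K t\<bar>) * h\<^sup>2"
proof -
  have gm: "g \<in> borel_measurable borel"
    using d1 by (meson DERIV_isCont borel_measurable_continuous_onI continuous_at_imp_continuous_on)
  define R where "R t = g (x - h * t) - g x + h * t * g' x" for t
  have R: "\<bar>R t\<bar> \<le> B * (h * t)\<^sup>2" for t
    using taylor_second_order_abs_le[OF d1 d2 B2, of x "- h * t"] by (simp add: R_def algebra_simps)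
  have KR: "(\<lambda>t. K t * R t) = (\<lambda>t. K t * g (x - h * t) - g x * K t + (h * g' x) * (t * K t))"
    by (simp add: R_def algebra_simps fun_eq_iff)
  note ints = integrable_kernel_smooth_integrand[OF K_int gm B0] K_int integrable_first_moment[OF K_int K_mom2]
  have "kernel_smooth K h g x - g x = (LINT t|lborel. K t * R t)"
    unfolding KR kernel_smooth_def using ints K_one integral_odd_moment_zero[of K, OF K_sym] by simp
  also have "\<bar>\<dots>\<bar> \<le> (LINT t|lborel. \<bar>K t * R t\<bar>)"
    by (rule integral_abs_bound)
  also have "\<dots> \<le> (LINT t|lborel. (B * h\<^sup>2) * \<bar>t\<^sup>2 * K t\<bar>)"
  proof (rule integral_mono)
    have "integrable lborel (\<lambda>t. K t * R t)"
      unfolding KR using ints by auto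
    then show "integrable lborel (\<lambda>t. \<bar>K t * R t\<bar>)"
      by (rule integrable_abs)
    fix t
    have "\<bar>K t\<bar> * \<bar>R t\<bar> \<le> \<bar>K t\<bar> * (B * (h * t)\<^sup>2)"
      by (rule mult_left_mono[OF R]) simp
    then show "\<bar>K t * R t\<bar> \<le> (B * h\<^sup>2) * \<bar>t\<^sup>2 * K t\<bar>"
      by (simp add: abs_mult power_mult_distrib algebra_simps)
  qed (use K_mom2 in simp)
  finally show ?thesis by (simp add: ac_simps)
qed

lemma integrable_square_kernel_smooth:
  fixes K g :: "real \<Rightarrow> real"
  assumes "integrable lborel K" and "bounded_C2 g" and "integrable lborel g"
  shows "integrable lborel (\<lambda>x. (kernel_smooth K h g x)\<^sup>2)"
proof -
  obtain B where "\<And>x. \<bar>g x\<bar> \<le> B" using assms(2) by (rule bounded_C2E) blast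
  then show ?thesis
    using integrable_kernel_smooth(1)[OF assms(1,3)]
      abs_kernel_smooth_le[OF assms(1) bounded_C2_measurable[OF assms(2)]]
    by (blast intro: integrable_square_bounded)
qed

lemma abs_integral_square_diff_le:
  fixes u v :: "'a \<Rightarrow> real"
  assumes "integrable M u" and "integrable M v"
    and "integrable M (\<lambda>x. (u x)\<^sup>2)" and "integrable M (\<lambda>x. (v x)\<^sup>2)"
    and uv: "\<And>x. \<bar>u x - v x\<bar> \<le> e"
  shows "\<bar>(\<integral>x. (u x)\<^sup>2 \<partial>M) - (\<integral>x. (v x)\<^sup>2 \<partial>M)\<bar> \<le> e * ((\<integral>x. \<bar>u x\<bar> \<partial>M) + (\<integral>x. \<bar>v x\<bar> \<partial>M))"
proof -
  have "\<bar>(\<integral>x. (u x)\<^sup>2 \<partial>M) - (\<integral>x. (v x)\<^sup>2 \<partial>M)\<bar> = \<bar>\<integral>x. (u x)\<^sup>2 - (v x)\<^sup>2 \<partial>M\<bar>"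
    using assms by simp
  also have "\<dots> \<le> (\<integral>x. \<bar>(u x)\<^sup>2 - (v x)\<^sup>2\<bar> \<partial>M)"
    by (rule integral_abs_bound)
  also have "\<dots> \<le> (\<integral>x. e * (\<bar>u x\<bar> + \<bar>v x\<bar>) \<partial>M)"
  proof (rule integral_mono)
    fix x
    have "\<bar>(u x)\<^sup>2 - (v x)\<^sup>2\<bar> = \<bar>u x - v x\<bar> * \<bar>u x + v x\<bar>"
      by (simp add: power2_eq_square abs_mult[symmetric] algebra_simps)
    also have "\<dots> \<le> e * (\<bar>u x\<bar> + \<bar>v x\<bar>)"
      using uv[of x] by (intro mult_mono) (auto simp: abs_triangle_ineq)
    finally show "\<bar>(u x)\<^sup>2 - (v x)\<^sup>2\<bar> \<le> e * (\<bar>u x\<bar> + \<bar>v x\<bar>)" .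
  qed (use assms in auto)
  also have "\<dots> = e * ((\<integral>x. \<bar>u x\<bar> \<partial>M) + (\<integral>x. \<bar>v x\<bar> \<partial>M))"
    using assms by (simp add: integrable_abs)
  finally show ?thesis .
qed

definition smoothing_defect :: "(real \<Rightarrow> real) \<Rightarrow> real \<Rightarrow> (real \<Rightarrow> real) \<Rightarrow> real" where
  "smoothing_defect K h g = (LINT x|lborel. (kernel_smooth K h g x)\<^sup>2) - (LINT x|lborel. (g x)\<^sup>2)"

lemma abs_smoothing_defect_le:
  fixes K g :: "real \<Rightarrow> real"
  assumes K_sym: "\<And>x. K (- x) = K x"
    and K_int: "integrable lborel K" and K_one: "(LINT x|lborel. K x) = 1"
    and K_mom2: "integrable lborel (\<lambda>x. x\<^sup>2 * K x)"
    and g: "bounded_C2 g" and g_int: "integrable lborel g"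
  obtains E where "\<And>h. \<bar>smoothing_defect K h g\<bar> \<le> E * h\<^sup>2"
proof -
  obtain g' g'' B where d1: "\<And>x. (g has_real_derivative g' x) (at x)"
    and d2: "\<And>x. (g' has_real_derivative g'' x) (at x)"
    and B0: "\<And>x. \<bar>g x\<bar> \<le> B" and B2: "\<And>x. \<bar>g'' x\<bar> \<le> B" and "0 \<le> B"
    using g by (rule bounded_C2E) blast
  define M2 where "M2 = (LINT t|lborel. \<bar>t\<^sup>2 * K t\<bar>)"
  define L1 where "L1 = (LINT t|lborel. \<bar>K t\<bar>) * (LINT y|lborel. \<bar>g y\<bar>) + (LINT y|lborel. \<bar>g y\<bar>)"
  have "0 \<le> B * M2" using \<open>0 \<le> B\<close> by (simp add: M2_def)
  have "\<bar>smoothing_defect K h g\<bar> \<le> B * M2 * L1 * h\<^sup>2" for h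
  proof -
    let ?k = "kernel_smooth K h g"
    have "\<bar>smoothing_defect K h g\<bar> \<le> (B * M2 * h\<^sup>2) * ((LINT x|lborel. \<bar>?k x\<bar>) + (LINT x|lborel. \<bar>g x\<bar>))"
      unfolding smoothing_defect_def
      using abs_kernel_smooth_diff_le[OF K_sym K_int K_one K_mom2 d1 d2 B0 B2, of h]
      by (intro abs_integral_square_diff_le integrable_kernel_smooth(1) integrable_square_kernel_smooth
          integrable_square_bounded[OF g_int B0] K_int g g_int) (simp add: M2_def)
    also have "\<dots> \<le> (B * M2 * h\<^sup>2) * L1"
      using integrable_kernel_smooth(2)[OF K_int g_int, of h] \<open>0 \<le> B * M2\<close>
      unfolding L1_def by (intro mult_left_mono) auto
    finally show ?thesis by (simp add: algebra_simps)
  qed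
  then show ?thesis by (rule that)
qed

section \<open>Pointwise mean squared error of kernel density estimators\<close>

lemma kde_pointwise_mse:
  fixes K :: "real \<Rightarrow> real" and g :: "'i \<Rightarrow> real \<Rightarrow> real" and B :: "'i \<Rightarrow> real"
  assumes fin: "finite I"
    and g_meas: "\<And>l. g l \<in> borel_measurable borel"
    and g_nonneg: "\<And>l y. l \<in> I \<Longrightarrow> 0 \<le> g l y"
    and g_bdd: "\<And>l y. l \<in> I \<Longrightarrow> \<bar>g l y\<bar> \<le> B l"
    and g_prob: "\<And>l. l \<in> I \<Longrightarrow> prob_space (density lborel (\<lambda>y. ennreal (g l y)))"
    and K_int: "integrable lborel K" and K_sq: "integrable lborel (\<lambda>x. (K x)\<^sup>2)"
    and h: "0 < h"
  shows "(\<integral>X. (c * (\<Sum>l\<in>I. K ((x - X l) / h)) - y)\<^sup>2 \<partial>PiM I (\<lambda>l. density lborel (\<lambda>y. ennreal (g l y)))) =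
    (c * h * (\<Sum>l\<in>I. kernel_smooth K h (g l) x) - y)\<^sup>2 +
    c\<^sup>2 * h * (\<Sum>l\<in>I. kernel_smooth (\<lambda>t. (K t)\<^sup>2) h (g l) x)
      - (c * h)\<^sup>2 * (\<Sum>l\<in>I. (kernel_smooth K h (g l) x)\<^sup>2)"
proof -
  define M where "M l = density lborel (\<lambda>y. ennreal (g l y))" for l
  define \<phi> :: "'i \<Rightarrow> real \<Rightarrow> real" where "\<phi> = (\<lambda>l z. c * K ((x - z) / h))"
  have "product_sigma_finite M"
    unfolding M_def using g_meas
    by (intro product_sigma_finite.intro sigma_finite_measure.sigma_finite_iff_density_finite[THEN iffD2])
      (auto intro: sigma_finite_lborel)
  moreover have "integrable (M l) (\<phi> l) \<and> (\<integral>z. \<phi> l z \<partial>M l) = c * h * kernel_smooth K h (g l) x"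
    if "l \<in> I" for l
    using integral_kernel_density[OF K_int g_meas g_bdd[OF that] g_nonneg[OF that] h, of x]
    by (simp add: M_def \<phi>_def)
  moreover have "integrable (M l) (\<lambda>z. (\<phi> l z)\<^sup>2) \<and>
      (\<integral>z. (\<phi> l z)\<^sup>2 \<partial>M l) = c\<^sup>2 * h * kernel_smooth (\<lambda>t. (K t)\<^sup>2) h (g l) x"
    if "l \<in> I" for l
    using integral_kernel_density[OF K_sq g_meas g_bdd[OF that] g_nonneg[OF that] h, of x]
    by (simp add: M_def \<phi>_def power_mult_distrib)
  ultimately have "(\<integral>X. (- y + (\<Sum>l\<in>I. \<phi> l (X l)))\<^sup>2 \<partial>PiM I M) =
      (- y + (\<Sum>l\<in>I. c * h * kernel_smooth K h (g l) x))\<^sup>2 +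
      (\<Sum>l\<in>I. c\<^sup>2 * h * kernel_smooth (\<lambda>t. (K t)\<^sup>2) h (g l) x - (c * h * kernel_smooth K h (g l) x)\<^sup>2)"
    using PiM_integral_square_sum[OF _ fin, of M \<phi> "- y"] g_prob by (simp add: M_def cong: sum.cong)
  then show ?thesis
    unfolding M_def \<phi>_def by (simp add: sum_distrib_left sum_subtractf power_mult_distrib)
qed

lemma sum_product_fst:
  "(\<Sum>l\<in>A \<times> B. G (fst l)) = real (card B) * (\<Sum>j\<in>A. G j :: real)"
  using sum.cartesian_product[where g="\<lambda>x y. G x" and A=A and B=B]
  by (simp add: case_prod_unfold sum_distrib_left)

lemma kde_srs_pointwise_mse:
  fixes K f :: "real \<Rightarrow> real"
  assumes f_meas: "f \<in> borel_measurable borel" and f_nonneg: "\<And>y. 0 \<le> f y" and f_bdd: "\<And>y. \<bar>f y\<bar> \<le> B"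
    and f_prob: "prob_space (density lborel (\<lambda>x. ennreal (f x)))"
    and K_int: "integrable lborel K" and K_sq: "integrable lborel (\<lambda>x. (K x)\<^sup>2)"
    and h: "0 < h" and N: "1 \<le> N"
  shows "(LINT X|srs_sample_measure f N. (kde_srs K N h X x - f x)\<^sup>2) =
    (kernel_smooth K h f x - f x)\<^sup>2 + kernel_smooth (\<lambda>t. (K t)\<^sup>2) h f x / (real N * h)
      - (kernel_smooth K h f x)\<^sup>2 / real N"
proof -
  define c where "c = 1 / (real N * h)"
  have "kde_srs K N h X x = c * (\<Sum>l\<in>{1..N}. K ((x - X l) / h))" for X
    by (simp add: kde_srs_def c_def)
  then have "(LINT X|srs_sample_measure f N. (kde_srs K N h X x - f x)\<^sup>2) =
      (c * h * (real N * kernel_smooth K h f x) - f x)\<^sup>2 +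
      c\<^sup>2 * h * (real N * kernel_smooth (\<lambda>t. (K t)\<^sup>2) h f x) - (c * h)\<^sup>2 * (real N * (kernel_smooth K h f x)\<^sup>2)"
    unfolding srs_sample_measure_def
    using kde_pointwise_mse[of "{1..N}" "\<lambda>_. f" "\<lambda>_. B", OF _ f_meas f_nonneg f_bdd f_prob K_int K_sq h]
    by simp
  moreover have "c * h * (real N * z) = z" "c\<^sup>2 * h * (real N * z) = z / (real N * h)"
    "(c * h)\<^sup>2 * (real N * z) = z / real N" for z
    using h N by (simp_all add: c_def field_simps power2_eq_square)
  ultimately show ?thesis by simp
qed

text \<open>Squared bias plus leading variance term, shared by the PROS and the SRS estimator.\<close>
definition mise_main_part :: "(real \<Rightarrow> real) \<Rightarrow> (real \<Rightarrow> real) \<Rightarrow> nat \<Rightarrow> real \<Rightarrow> real \<Rightarrow> real" where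
  "mise_main_part f K N h x = (kernel_smooth K h f x - f x)\<^sup>2 + kernel_smooth (\<lambda>t. (K t)\<^sup>2) h f x / (real N * h)"

lemma integrable_mise_main_part:
  fixes K f :: "real \<Rightarrow> real"
  assumes f: "integrable lborel f" and f_bdd: "\<And>y. \<bar>f y\<bar> \<le> B"
    and K_int: "integrable lborel K" and K_sq: "integrable lborel (\<lambda>x. (K x)\<^sup>2)"
  shows "integrable lborel (mise_main_part f K N h)"
proof -
  have f_meas: "f \<in> borel_measurable borel" using f by auto
  have "\<bar>kernel_smooth K h f x - f x\<bar> \<le> B * (LINT t|lborel. \<bar>K t\<bar>) + B" for x
    using abs_kernel_smooth_le[OF K_int f_meas f_bdd, of h x] f_bdd[of x] by linarith
  then have "integrable lborel (\<lambda>x. (kernel_smooth K h f x - f x)\<^sup>2)"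
    by (intro integrable_square_bounded Bochner_Integration.integrable_diff integrable_kernel_smooth(1) K_int f)
  then show ?thesis
    unfolding mise_main_part_def[abs_def] using integrable_kernel_smooth(1)[OF K_sq f] by simp
qed

section \<open>Distribution functions and order statistics\<close>

lemma prob_space_density_lborel:
  fixes f :: "real \<Rightarrow> real"
  assumes "\<And>x. 0 \<le> f x" and "integrable lborel f" and "(LINT x|lborel. f x) = 1"
  shows "prob_space (density lborel (\<lambda>x. ennreal (f x)))"
proof (rule prob_spaceI)
  have "f \<in> borel_measurable borel" using assms(2) by auto
  then have "emeasure (density lborel (\<lambda>x. ennreal (f x))) UNIV = (\<integral>\<^sup>+ x. ennreal (f x) \<partial>lborel)"
    by (simp add: emeasure_density)
  also have "\<dots> = 1"
    using nn_integral_eq_integral[OF assms(2)] assms by simp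
  finally show "emeasure (density lborel (\<lambda>x. ennreal (f x))) (space (density lborel (\<lambda>x. ennreal (f x)))) = 1"
    by simp
qed

lemma cdf_of_distribution:
  fixes f :: "real \<Rightarrow> real"
  assumes f_nonneg: "\<And>x. 0 \<le> f x" and f_int: "integrable lborel f" and f_one: "(LINT x|lborel. f x) = 1"
  shows "0 \<le> cdf_of f x" and "cdf_of f x \<le> 1"
    and "(cdf_of f \<longlongrightarrow> 1) at_top" and "(cdf_of f \<longlongrightarrow> 0) at_bot"
proof -
  have [measurable]: "f \<in> borel_measurable borel" using f_int by auto
  define D where "D = density lborel (\<lambda>x. ennreal (f x))"
  interpret prob_space D
    unfolding D_def by (rule prob_space_density_lborel[OF assms])
  interpret real_distribution D
    by standard (simp add: D_def)
  have "cdf D x = cdf_of f x" for x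
  proof -
    have "cdf D x = (\<integral>t. indicator {..x} t \<partial>D)"
      by (simp add: cdf_def D_def)
    also have "\<dots> = (\<integral>t. f t * indicator {..x} t \<partial>lborel)"
      unfolding D_def by (subst integral_density) (auto simp: f_nonneg)
    finally show ?thesis
      by (simp add: cdf_of_def set_lebesgue_integral_def mult.commute)
  qed
  then have cdf: "cdf D = cdf_of f" by (simp add: fun_eq_iff)
  show "0 \<le> cdf_of f x" "cdf_of f x \<le> 1"
    using cdf_nonneg cdf_bounded_prob unfolding cdf by auto
  show "(cdf_of f \<longlongrightarrow> 1) at_top" "(cdf_of f \<longlongrightarrow> 0) at_bot"
    using cdf_lim_at_top_prob cdf_lim_at_bot unfolding cdf by auto
qed

lemma DERIV_cdf_of:
  fixes f :: "real \<Rightarrow> real"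
  assumes f_int: "integrable lborel f" and f_cont: "\<And>x. isCont f x"
  shows "(cdf_of f has_real_derivative f x) (at x)"
proof -
  have split: "cdf_of f y = cdf_of f a + (LBINT t=a..y. f t)" if "a \<le> y" for a y
  proof -
    have "set_integrable lborel A f" if "A \<in> sets borel" for A
      unfolding set_integrable_def using that f_int by (intro integrable_mult_indicator) auto
    moreover have "{..y} = {..a} \<union> {a<..y}" using \<open>a \<le> y\<close> by auto
    ultimately have "cdf_of f y = (LINT t:{..a}|lborel. f t) + (LINT t:{a<..y}|lborel. f t)"
      unfolding cdf_of_def by (simp only:) (rule set_integral_Un, auto)
    then show ?thesis using that by (simp add: cdf_of_def interval_integral_Ioc)
  qed
  let ?a = "x - 1" and ?b = "x + 1"
  have "continuous_on {?a..?b} f" using f_cont by (simp add: continuous_at_imp_continuous_on)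
  then have "((\<lambda>u. LBINT y=?a..u. f y) has_vector_derivative (f x)) (at x within {?a..?b})"
    by (intro interval_integral_FTC2) auto
  then have "((\<lambda>u. LBINT y=?a..u. f y) has_real_derivative (f x)) (at x)"
    by (simp add: has_real_derivative_iff_has_vector_derivative at_within_Icc_at)
  then have "((\<lambda>u. cdf_of f ?a + (LBINT y=?a..u. f y)) has_real_derivative (f x)) (at x)"
    using DERIV_add[OF DERIV_const] by fastforce
  then show ?thesis
  proof (rule has_field_derivative_transform_within_open[of _ _ _ "{?a<..<?b}"])
    show "cdf_of f ?a + (LBINT y=?a..u. f y) = cdf_of f u" if "u \<in> {?a<..<?b}" for u
      using that by (intro split[symmetric]) auto
  qed auto
qed

lemma beta_integral_nat: "(LBINT p=0..1. p ^ a * (1 - p) ^ b :: real) = fact a * fact b / fact (a + b + 1)"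
proof -
  have Beta: "((\<lambda>t. t powr (real (a + 1) - 1) * (1 - t) powr (real (b + 1) - 1))
      has_integral Beta (real (a + 1)) (real (b + 1))) {0..1}"
    by (rule has_integral_Beta_real) auto
  have "((\<lambda>t::real. t ^ a * (1 - t) ^ b) has_integral Beta (real (a + 1)) (real (b + 1))) {0..1}"
  proof (rule has_integral_spike_finite[OF _ _ Beta, of "{0, 1}"])
    fix t :: real assume "t \<in> {0..1} - {0, 1}"
    then show "t ^ a * (1 - t) ^ b = t powr (real (a + 1) - 1) * (1 - t) powr (real (b + 1) - 1)"
      by (simp add: powr_realpow)
  qed auto
  moreover have "(LBINT p=0..1. p ^ a * (1 - p) ^ b :: real) = integral {0..1} (\<lambda>t::real. t ^ a * (1 - t) ^ b)"
    using interval_integral_eq_integral[of 0 1 "\<lambda>t::real. t ^ a * (1 - t) ^ b"]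
    by (simp add: borel_integrable_atLeastAtMost' continuous_intros zero_ereal_def one_ereal_def)
  moreover have "Beta (real (a + 1)) (real (b + 1)) = fact a * fact b / fact (a + b + 1)"
    using Gamma_fact[of a, where 'a=real] Gamma_fact[of b, where 'a=real] Gamma_fact[of "a + b + 1", where 'a=real]
    by (simp add: Beta_def add_ac)
  ultimately show ?thesis by (simp add: integral_unique)
qed

text \<open>Substituting \<open>p = F x\<close> turns the integral into a Beta integral.\<close>
lemma integral_cdf_power_density:
  fixes f F :: "real \<Rightarrow> real"
  assumes f_nonneg: "\<And>x. 0 \<le> f x" and f_int: "integrable lborel f" and f_cont: "\<And>x. isCont f x"
    and F0: "\<And>x. 0 \<le> F x" and F1: "\<And>x. F x \<le> 1"
    and F_top: "(F \<longlongrightarrow> 1) at_top" and F_bot: "(F \<longlongrightarrow> 0) at_bot"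
    and F_deriv: "\<And>x. (F has_real_derivative f x) (at x)"
  shows "integrable lborel (\<lambda>x. F x ^ a * (1 - F x) ^ b * f x)"
    and "(LINT x|lborel. F x ^ a * (1 - F x) ^ b * f x) = fact a * fact b / fact (a + b + 1)"
proof -
  have [measurable]: "f \<in> borel_measurable borel" using f_int by auto
  have [measurable]: "F \<in> borel_measurable borel"
    using F_deriv by (meson DERIV_isCont borel_measurable_continuous_onI continuous_at_imp_continuous_on)
  have "\<bar>F x ^ a * (1 - F x) ^ b * f x\<bar> \<le> \<bar>f x\<bar>" for x
    using F0[of x] F1[of x] f_nonneg[of x]
    by (simp add: abs_mult mult_left_le_one_le mult_le_one power_le_one)
  then show int: "integrable lborel (\<lambda>x. F x ^ a * (1 - F x) ^ b * f x)"
    by (intro Bochner_Integration.integrable_bound[OF f_int]) auto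
  then have "set_integrable lborel (einterval (-\<infinity>) \<infinity>) (\<lambda>x. F x ^ a * (1 - F x) ^ b * f x)"
    by (simp add: set_integrable_def einterval_def)
  then have "(LBINT p=ereal 0..ereal 1. p ^ a * (1 - p) ^ b) = (LBINT x=-\<infinity>..\<infinity>. (F x ^ a * (1 - F x) ^ b) * f x)"
    using F_top F_bot
    by (intro interval_integral_substitution_nonneg(2))
      (auto simp: F_deriv f_cont F0 F1 f_nonneg ereal_tendsto_simps o_assoc[symmetric] intro!: continuous_intros)
  then show "(LINT x|lborel. F x ^ a * (1 - F x) ^ b * f x) = fact a * fact b / fact (a + b + 1)"
    using beta_integral_nat[of a b]
    by (simp add: zero_ereal_def one_ereal_def interval_lebesgue_integral_def einterval_def set_lebesgue_integral_def)
qed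

lemma sum_order_statistic_weights:
  assumes "0 < s"
  shows "(\<Sum>u\<in>{1..s}. fact s / (fact (u - 1) * fact (s - u)) * p ^ (u - 1) * (1 - p) ^ (s - u)) = (real s :: real)"
proof -
  obtain t where st: "s = Suc t" using assms by (cases s) auto
  have "(\<Sum>u\<in>{1..s}. fact s / (fact (u - 1) * fact (s - u)) * p ^ (u - 1) * (1 - p) ^ (s - u))
      = (\<Sum>k\<in>{0..t}. fact (Suc t) / (fact k * fact (t - k)) * p ^ k * (1 - p) ^ (t - k))"
    unfolding st One_nat_def sum.shift_bounds_cl_Suc_ivl by simp
  also have "\<dots> = (\<Sum>k\<in>{0..t}. real (Suc t) * (of_nat (t choose k) * p ^ k * (1 - p) ^ (t - k)))"
    by (intro sum.cong refl) (simp add: binomial_fact fact_Suc[of t] del: fact_Suc)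
  also have "\<dots> = real (Suc t) * (\<Sum>k\<in>{0..t}. of_nat (t choose k) * p ^ k * (1 - p) ^ (t - k))"
    by (simp add: sum_distrib_left)
  also have "(\<Sum>k\<in>{0..t}. of_nat (t choose k) * p ^ k * (1 - p) ^ (t - k)) = (p + (1 - p)) ^ t"
    unfolding binomial_ring atLeast0AtMost ..
  finally show ?thesis using st by simp
qed

lemma sum_consecutive_blocks:
  fixes g :: "nat \<Rightarrow> real"
  shows "(\<Sum>h\<in>{1..k}. \<Sum>u\<in>{(h - 1) * m + 1..h * m}. g u) = (\<Sum>u\<in>{1..k * m}. g u)"
proof (induction k)
  case (Suc k)
  have "{1..Suc k * m} = {1..k * m} \<union> {k * m + 1..Suc k * m}" by auto
  then have "(\<Sum>u\<in>{1..Suc k * m}. g u) = (\<Sum>u\<in>{1..k * m}. g u) + (\<Sum>u\<in>{k * m + 1..Suc k * m}. g u)"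
    by (simp add: sum.union_disjoint)
  then show ?case using Suc by simp
qed simp

lemma card_dblock: "1 \<le> h \<Longrightarrow> card (dblock s n h) = s div n"
  unfolding dblock_def by (cases h) (auto simp: algebra_simps)

lemma sum_dblocks:
  fixes g :: "nat \<Rightarrow> real"
  assumes "n dvd s"
  shows "(\<Sum>h\<in>{1..n}. \<Sum>u\<in>dblock s n h. g u) = (\<Sum>u\<in>{1..s}. g u)"
  using sum_consecutive_blocks[where k=n and m="s div n" and g=g] assms unfolding dblock_def by simp

lemma dblock_subset:
  assumes "n dvd s" and "h \<in> {1..n}"
  shows "dblock s n h \<subseteq> {1..s}"
proof -
  have "h * (s div n) \<le> n * (s div n)" using assms(2) by simp
  then show ?thesis using assms(1) by (auto simp: dblock_def)
qed

section \<open>Densities of a PROS sample\<close>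

locale pros_setting =
  fixes f f' f'' :: "real \<Rightarrow> real" and s n :: nat and \<alpha> :: "nat \<Rightarrow> nat \<Rightarrow> real"
  assumes f_nonneg: "\<And>x. 0 \<le> f x"
    and f_int: "integrable lborel f" and f_one: "(LINT x|lborel. f x) = 1"
    and f_d1: "\<And>x. (f has_real_derivative f' x) (at x)"
    and f_d2: "\<And>x. (f' has_real_derivative f'' x) (at x)"
    and f_bdd: "bounded (range f)" and f'_bdd: "bounded (range f')" and f''_bdd: "bounded (range f'')"
    and s_pos: "0 < s" and n_pos: "0 < n" and n_dvd_s: "n dvd s"
    and alpha: "doubly_stochastic n \<alpha>"
begin

abbreviation F :: "real \<Rightarrow> real" where "F \<equiv> cdf_of f"

lemma f_cont: "isCont f x"
  using f_d1 by (rule DERIV_isCont)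

lemmas F_nonneg = cdf_of_distribution(1)[OF f_nonneg f_int f_one]
  and F_le_one = cdf_of_distribution(2)[OF f_nonneg f_int f_one]
  and F_at_top = cdf_of_distribution(3)[OF f_nonneg f_int f_one]
  and F_at_bot = cdf_of_distribution(4)[OF f_nonneg f_int f_one]
  and F_deriv = DERIV_cdf_of[OF f_int f_cont]

lemma bounded_C2_f: "bounded_C2 f"
  using f_d1 f_d2 f_bdd f'_bdd f''_bdd by (rule bounded_C2I)

lemma bounded_C2_F: "bounded_C2 F"
proof (rule bounded_C2I[OF F_deriv f_d1 _ f_bdd f'_bdd])
  show "bounded (range F)"
    using F_nonneg F_le_one by (intro boundedI[of _ 1]) (auto simp: abs_le_iff intro: order_trans[of _ 0])
qed

definition binom_coeff :: "nat \<Rightarrow> real" where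
  "binom_coeff u = fact s / (fact (u - 1) * fact (s - u))"

lemma ord_stat_dens_eq: "ord_stat_dens f s u x = binom_coeff u * (F x ^ (u - 1) * (1 - F x) ^ (s - u) * f x)"
  by (simp add: ord_stat_dens_def binom_coeff_def mult.assoc)

lemma ord_stat_dens_nonneg: "0 \<le> ord_stat_dens f s u x"
  unfolding ord_stat_dens_def using F_nonneg[of x] F_le_one[of x] f_nonneg[of x] by simp

lemma bounded_C2_ord_stat_dens: "bounded_C2 (ord_stat_dens f s u)"
  unfolding ord_stat_dens_eq[abs_def] diff_conv_add_uminus
  by (intro bounded_C2_mult bounded_C2_power bounded_C2_add bounded_C2_const bounded_C2_F bounded_C2_f)
    (use bounded_C2_mult[OF bounded_C2_const bounded_C2_F, of "-1"] in simp)

lemma sum_ord_stat_dens: "(\<Sum>u\<in>{1..s}. ord_stat_dens f s u x) = real s * f x"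
proof -
  have "(\<Sum>u\<in>{1..s}. ord_stat_dens f s u x) =
      (\<Sum>u\<in>{1..s}. binom_coeff u * F x ^ (u - 1) * (1 - F x) ^ (s - u)) * f x"
    by (simp add: ord_stat_dens_eq sum_distrib_right mult.assoc)
  then show ?thesis
    using sum_order_statistic_weights[OF s_pos, of "F x"] by (simp add: binom_coeff_def)
qed

lemma ord_stat_dens_integral:
  assumes "u \<in> {1..s}"
  shows "integrable lborel (ord_stat_dens f s u)" and "(LINT x|lborel. ord_stat_dens f s u x) = 1"
proof -
  note beta = integral_cdf_power_density[OF f_nonneg f_int f_cont F_nonneg F_le_one F_at_top F_at_bot F_deriv,
      of "u - 1" "s - u"]
  show "integrable lborel (ord_stat_dens f s u)"
    unfolding ord_stat_dens_eq[abs_def] using beta(1) by simp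
  have "u - 1 + (s - u) + 1 = s" using assms by simp
  then show "(LINT x|lborel. ord_stat_dens f s u x) = 1"
    unfolding ord_stat_dens_eq using beta(2) by (simp add: binom_coeff_def)
qed

lemma alpha_nonneg: "j \<in> {1..n} \<Longrightarrow> h \<in> {1..n} \<Longrightarrow> 0 \<le> \<alpha> j h"
  using alpha unfolding doubly_stochastic_def by auto

lemma block_size_pos: "0 < s div n"
  using s_pos n_pos n_dvd_s by (metis dvd_mult_div_cancel gr0I mult_0_right)

lemma pros_dens_nonneg: "j \<in> {1..n} \<Longrightarrow> 0 \<le> pros_dens f s n \<alpha> j x"
  unfolding pros_dens_def by (intro mult_nonneg_nonneg sum_nonneg alpha_nonneg ord_stat_dens_nonneg) auto

lemma bounded_C2_pros_dens: "bounded_C2 (pros_dens f s n \<alpha> j)"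
  unfolding pros_dens_def[abs_def]
  by (intro bounded_C2_mult bounded_C2_const bounded_C2_sum bounded_C2_ord_stat_dens) (auto simp: dblock_def)

lemma pros_dens_measurable: "pros_dens f s n \<alpha> j \<in> borel_measurable borel"
  by (rule bounded_C2_measurable[OF bounded_C2_pros_dens])

text \<open>Since the columns of \<open>\<alpha>\<close> sum to one, averaging the \<open>f\<^sub>[\<^sub>d\<^sub>j\<^sub>]\<close> undoes the ranking.\<close>
lemma sum_pros_dens: "(\<Sum>j\<in>{1..n}. pros_dens f s n \<alpha> j x) = real n * f x"
proof -
  have "(\<Sum>j\<in>{1..n}. pros_dens f s n \<alpha> j x)
      = (\<Sum>j\<in>{1..n}. \<Sum>h\<in>{1..n}. \<Sum>u\<in>dblock s n h. \<alpha> j h * ord_stat_dens f s u x) / real (s div n)"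
    by (simp add: pros_dens_def sum_divide_distrib)
  also have "\<dots> = (\<Sum>h\<in>{1..n}. \<Sum>u\<in>dblock s n h. \<Sum>j\<in>{1..n}. \<alpha> j h * ord_stat_dens f s u x) / real (s div n)"
    by (subst sum.swap) (simp only: sum.swap[of _ _ "dblock s n _"])
  also have "\<dots> = (\<Sum>h\<in>{1..n}. \<Sum>u\<in>dblock s n h. (\<Sum>j\<in>{1..n}. \<alpha> j h) * ord_stat_dens f s u x) / real (s div n)"
    by (simp add: sum_distrib_right)
  also have "\<dots> = (\<Sum>u\<in>{1..s}. ord_stat_dens f s u x) / real (s div n)"
    using alpha sum_dblocks[OF n_dvd_s] unfolding doubly_stochastic_def by simp
  also have "\<dots> = real n * f x"
    using n_dvd_s block_size_pos unfolding sum_ord_stat_dens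
    by (auto simp: field_simps elim!: dvdE)
  finally show ?thesis .
qed

lemma pros_dens_integral:
  assumes j: "j \<in> {1..n}"
  shows "integrable lborel (pros_dens f s n \<alpha> j)" and "(LINT x|lborel. pros_dens f s n \<alpha> j x) = 1"
proof -
  have u: "u \<in> {1..s}" if "h \<in> {1..n}" "u \<in> dblock s n h" for h u
    using dblock_subset[OF n_dvd_s that(1)] that(2) by blast
  have int: "integrable lborel (\<lambda>x. \<alpha> j h * ord_stat_dens f s u x)"
    if "h \<in> {1..n}" "u \<in> dblock s n h" for h u
    using ord_stat_dens_integral(1)[OF u[OF that]] by simp
  then show "integrable lborel (pros_dens f s n \<alpha> j)"
    unfolding pros_dens_def[abs_def] by (intro integrable_mult_right Bochner_Integration.integrable_sum) auto
  have "(LINT x|lborel. pros_dens f s n \<alpha> j x) =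
      (\<Sum>h\<in>{1..n}. \<Sum>u\<in>dblock s n h. \<alpha> j h * (LINT x|lborel. ord_stat_dens f s u x)) / real (s div n)"
    unfolding pros_dens_def using int by (simp add: Bochner_Integration.integrable_sum)
  also have "\<dots> = (\<Sum>h\<in>{1..n}. \<alpha> j h)"
    using ord_stat_dens_integral(2)[OF u] card_dblock block_size_pos by (simp add: sum_distrib_left[symmetric])
  also have "\<dots> = 1"
    using alpha j unfolding doubly_stochastic_def by simp
  finally show "(LINT x|lborel. pros_dens f s n \<alpha> j x) = 1" .
qed

lemma prob_space_pros_dens: "j \<in> {1..n} \<Longrightarrow> prob_space (density lborel (\<lambda>x. ennreal (pros_dens f s n \<alpha> j x)))"
  using pros_dens_nonneg pros_dens_integral by (intro prob_space_density_lborel) auto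

lemma pros_dens_bounded:
  obtains B where "\<And>j y. \<bar>pros_dens f s n \<alpha> j y\<bar> \<le> B j"
proof -
  have "\<exists>B. \<forall>y. \<bar>pros_dens f s n \<alpha> j y\<bar> \<le> B" for j
    using bounded_C2_pros_dens by (metis bounded_C2E)
  then show ?thesis using that by metis
qed

lemma sum_kernel_smooth_pros_dens:
  assumes "integrable lborel Q"
  shows "(\<Sum>j\<in>{1..n}. kernel_smooth Q h (pros_dens f s n \<alpha> j) x) = real n * kernel_smooth Q h f x"
proof -
  obtain B where B: "\<And>j y. \<bar>pros_dens f s n \<alpha> j y\<bar> \<le> B j" by (rule pros_dens_bounded) blast
  show ?thesis
    using kernel_smooth_sum[of "{1..n}" Q "pros_dens f s n \<alpha>" x h] sum_pros_dens kernel_smooth_cmult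
      integrable_kernel_smooth_integrand[OF assms pros_dens_measurable B]
    by simp
qed

section \<open>Comparison of the two MISEs\<close>

lemma kde_pros_pointwise_mse:
  fixes K :: "real \<Rightarrow> real"
  assumes K_int: "integrable lborel K" and K_sq: "integrable lborel (\<lambda>x. (K x)\<^sup>2)"
    and h: "0 < h" and L: "1 \<le> L"
  shows "(LINT X|pros_sample_measure f s n L \<alpha>. (kde_pros K n L h X x - f x)\<^sup>2) =
    (kernel_smooth K h f x - f x)\<^sup>2 + kernel_smooth (\<lambda>t. (K t)\<^sup>2) h f x / (real (n * L) * h)
      - (\<Sum>j\<in>{1..n}. (kernel_smooth K h (pros_dens f s n \<alpha> j) x)\<^sup>2) / (real n * real (n * L))"
proof -
  define p where "p = pros_dens f s n \<alpha>"
  define c where "c = 1 / (real n * real L * h)"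
  obtain B where B: "\<And>j y. \<bar>p j y\<bar> \<le> B j"
    unfolding p_def by (rule pros_dens_bounded) blast
  note smooth_sum = sum_kernel_smooth_pros_dens[of _ h x, folded p_def]
  let ?I = "{1..n} \<times> {1..L}"
  have "kde_pros K n L h X x = c * (\<Sum>l\<in>?I. K ((x - X l) / h))" for X
    by (simp add: kde_pros_def c_def sum.cartesian_product)
  moreover have "(\<integral>X. (c * (\<Sum>l\<in>?I. K ((x - X l) / h)) - f x)\<^sup>2
      \<partial>PiM ?I (\<lambda>l. density lborel (\<lambda>y. ennreal (p (fst l) y)))) =
    (c * h * (\<Sum>l\<in>?I. kernel_smooth K h (p (fst l)) x) - f x)\<^sup>2 +
    c\<^sup>2 * h * (\<Sum>l\<in>?I. kernel_smooth (\<lambda>t. (K t)\<^sup>2) h (p (fst l)) x)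
      - (c * h)\<^sup>2 * (\<Sum>l\<in>?I. (kernel_smooth K h (p (fst l)) x)\<^sup>2)"
    by (rule kde_pointwise_mse[where B="\<lambda>l. B (fst l)", OF _ _ _ _ _ K_int K_sq h])
      (use pros_dens_measurable pros_dens_nonneg B prob_space_pros_dens in \<open>auto simp: p_def\<close>)
  ultimately have "(LINT X|pros_sample_measure f s n L \<alpha>. (kde_pros K n L h X x - f x)\<^sup>2) =
    (c * h * (real L * (real n * kernel_smooth K h f x)) - f x)\<^sup>2 +
    c\<^sup>2 * h * (real L * (real n * kernel_smooth (\<lambda>t. (K t)\<^sup>2) h f x))
      - (c * h)\<^sup>2 * (real L * (\<Sum>j\<in>{1..n}. (kernel_smooth K h (p j) x)\<^sup>2))"
    unfolding pros_sample_measure_def p_def[symmetric]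
    using sum_product_fst[of "\<lambda>j. kernel_smooth K h (p j) x" "{1..n}" "{1..L}"]
      sum_product_fst[of "\<lambda>j. kernel_smooth (\<lambda>t. (K t)\<^sup>2) h (p j) x" "{1..n}" "{1..L}"]
      sum_product_fst[of "\<lambda>j. (kernel_smooth K h (p j) x)\<^sup>2" "{1..n}" "{1..L}"]
      smooth_sum[OF K_int] smooth_sum[OF K_sq]
    by (simp add: case_prod_unfold)
  moreover have "c * h * (real L * (real n * z)) = z"
    "c\<^sup>2 * h * (real L * (real n * z)) = z / (real (n * L) * h)"
    "(c * h)\<^sup>2 * (real L * z) = z / (real n * real (n * L))" for z
    using h n_pos L by (simp_all add: c_def field_simps power2_eq_square)
  ultimately show ?thesis by (simp add: p_def)
qed

lemma integrable_square_pros_dens: "integrable lborel (\<lambda>x. (pros_dens f s n \<alpha> j x)\<^sup>2)" if "j \<in> {1..n}"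
  using bounded_C2_pros_dens[of j] pros_dens_integral(1)[OF that]
  by (metis bounded_C2E integrable_square_bounded)

lemma integrable_square_f: "integrable lborel (\<lambda>x. (f x)\<^sup>2)"
  using bounded_C2_f f_int by (metis bounded_C2E integrable_square_bounded)

lemma Delta_pros_eq:
  "Delta_pros f s n \<alpha> = (\<Sum>j\<in>{1..n}. LINT x|lborel. (pros_dens f s n \<alpha> j x)\<^sup>2) / real n - (LINT x|lborel. (f x)\<^sup>2)"
proof -
  have "integrable lborel (\<lambda>x. 1 / real n * (\<Sum>j\<in>{1..n}. (pros_dens f s n \<alpha> j x)\<^sup>2))"
    using integrable_square_pros_dens by (intro integrable_mult_right Bochner_Integration.integrable_sum) auto
  then show ?thesis
    unfolding Delta_pros_def
    using integrable_square_pros_dens integrable_square_f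
    by (simp add: Bochner_Integration.integral_sum)
qed

lemma MISE_pros_minus_MISE_srs:
  fixes K :: "real \<Rightarrow> real"
  assumes K_int: "integrable lborel K" and K_sq: "integrable lborel (\<lambda>x. (K x)\<^sup>2)"
    and h: "0 < h" and L: "1 \<le> L"
  shows "MISE_pros f K s n L \<alpha> h - MISE_srs f K (n * L) h =
    ((LINT x|lborel. (kernel_smooth K h f x)\<^sup>2)
      - (\<Sum>j\<in>{1..n}. LINT x|lborel. (kernel_smooth K h (pros_dens f s n \<alpha> j) x)\<^sup>2) / real n) / real (n * L)"
proof -
  obtain B where B: "\<And>y. \<bar>f y\<bar> \<le> B" using bounded_C2_f by (rule bounded_C2E) blast
  have f_meas: "f \<in> borel_measurable borel" using f_int by auto
  have NL: "1 \<le> n * L" using n_pos L by (simp add: Suc_le_eq)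
  have A: "integrable lborel (mise_main_part f K (n * L) h)"
    by (rule integrable_mise_main_part[OF f_int B K_int K_sq])
  have k: "integrable lborel (\<lambda>x. (kernel_smooth K h f x)\<^sup>2)"
    by (rule integrable_square_kernel_smooth[OF K_int bounded_C2_f f_int])
  have kj: "integrable lborel (\<lambda>x. (kernel_smooth K h (pros_dens f s n \<alpha> j) x)\<^sup>2)" if "j \<in> {1..n}" for j
    by (rule integrable_square_kernel_smooth[OF K_int bounded_C2_pros_dens pros_dens_integral(1)[OF that]])
  have "integrable lborel (\<lambda>x. 1 / (real n * real (n * L)) *
      (\<Sum>j\<in>{1..n}. (kernel_smooth K h (pros_dens f s n \<alpha> j) x)\<^sup>2))"
    using kj by (intro integrable_mult_right Bochner_Integration.integrable_sum) auto
  then have "MISE_pros f K s n L \<alpha> h = (LINT x|lborel. mise_main_part f K (n * L) h x)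
      - (\<Sum>j\<in>{1..n}. LINT x|lborel. (kernel_smooth K h (pros_dens f s n \<alpha> j) x)\<^sup>2) / real n / real (n * L)"
    unfolding MISE_pros_def kde_pros_pointwise_mse[OF K_int K_sq h L] mise_main_part_def[symmetric]
    using A kj by (simp add: Bochner_Integration.integral_sum)
  moreover have "MISE_srs f K (n * L) h = (LINT x|lborel. mise_main_part f K (n * L) h x)
      - (LINT x|lborel. (kernel_smooth K h f x)\<^sup>2) / real (n * L)"
    unfolding MISE_srs_def kde_srs_pointwise_mse[OF f_meas f_nonneg B prob_space_density_lborel[OF f_nonneg f_int f_one] K_int K_sq h NL]
      mise_main_part_def[symmetric]
    using A k f_int by auto
  ultimately show ?thesis
    unfolding diff_divide_distrib by linarith
qed

lemma MISE_pros_expansion: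
  fixes K :: "real \<Rightarrow> real"
  assumes K_int: "integrable lborel K" and K_sq: "integrable lborel (\<lambda>x. (K x)\<^sup>2)"
    and h: "0 < h" and L: "1 \<le> L"
  shows "MISE_pros f K s n L \<alpha> h - (MISE_srs f K (n * L) h - Delta_pros f s n \<alpha> / real (n * L)) =
    (smoothing_defect K h f - (\<Sum>j\<in>{1..n}. smoothing_defect K h (pros_dens f s n \<alpha> j)) / real n) / real (n * L)"
proof -
  have "Delta_pros f s n \<alpha> / real (n * L) = (\<Sum>j\<in>{1..n}. LINT x|lborel. (pros_dens f s n \<alpha> j x)\<^sup>2) / real n / real (n * L)
      - (LINT x|lborel. (f x)\<^sup>2) / real (n * L)"
    unfolding Delta_pros_eq diff_divide_distrib ..
  then show ?thesis
    using MISE_pros_minus_MISE_srs[OF assms]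
    unfolding smoothing_defect_def sum_subtractf diff_divide_distrib by linarith
qed

lemma abs_smoothing_defects_le:
  fixes K :: "real \<Rightarrow> real"
  assumes K_sym: "\<And>x. K (- x) = K x"
    and K_int: "integrable lborel K" and K_one: "(LINT x|lborel. K x) = 1"
    and K_mom2: "integrable lborel (\<lambda>x. x\<^sup>2 * K x)"
  obtains C where "\<And>h. \<bar>smoothing_defect K h f
      - (\<Sum>j\<in>{1..n}. smoothing_defect K h (pros_dens f s n \<alpha> j)) / real n\<bar> \<le> C * h\<^sup>2"
proof -
  note defect_le = abs_smoothing_defect_le[OF K_sym K_int K_one K_mom2]
  obtain E where E: "\<And>h. \<bar>smoothing_defect K h f\<bar> \<le> E * h\<^sup>2"
    using defect_le[OF bounded_C2_f f_int] by blast
  have "\<exists>E. \<forall>h. \<bar>smoothing_defect K h (pros_dens f s n \<alpha> j)\<bar> \<le> E * h\<^sup>2" if "j \<in> {1..n}" for j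
    using defect_le[OF bounded_C2_pros_dens pros_dens_integral(1)[OF that]] by metis
  then obtain Ej where Ej: "\<And>j h. j \<in> {1..n} \<Longrightarrow> \<bar>smoothing_defect K h (pros_dens f s n \<alpha> j)\<bar> \<le> Ej j * h\<^sup>2"
    by metis
  have "\<bar>smoothing_defect K h f - (\<Sum>j\<in>{1..n}. smoothing_defect K h (pros_dens f s n \<alpha> j)) / real n\<bar>
      \<le> (E + (\<Sum>j\<in>{1..n}. Ej j) / real n) * h\<^sup>2" for h
  proof -
    let ?S = "\<Sum>j\<in>{1..n}. smoothing_defect K h (pros_dens f s n \<alpha> j)"
    have "\<bar>smoothing_defect K h f - ?S / real n\<bar> \<le> \<bar>smoothing_defect K h f\<bar> + \<bar>?S\<bar> / real n"
      using abs_triangle_ineq4[of _ "?S / real n"] by (simp add: abs_divide)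
    also have "\<dots> \<le> E * h\<^sup>2 + (\<Sum>j\<in>{1..n}. Ej j * h\<^sup>2) / real n"
      using E[of h] Ej by (intro add_mono divide_right_mono order_trans[OF sum_abs] sum_mono) auto
    also have "\<dots> = (E + (\<Sum>j\<in>{1..n}. Ej j) / real n) * h\<^sup>2"
      using n_pos by (simp add: sum_distrib_right[symmetric] field_simps)
    finally show ?thesis .
  qed
  then show ?thesis by (rule that)
qed

end

theorem theorem3p2:
  fixes f f' f'' K :: "real \<Rightarrow> real" and s n :: nat and \<alpha> :: "nat \<Rightarrow> nat \<Rightarrow> real"
  assumes f_nonneg: "\<And>x. 0 \<le> f x"
    and f_int: "integrable lborel f" and f_one: "(LINT x|lborel. f x) = 1"
    and f_d1: "\<And>x. (f has_real_derivative f' x) (at x)"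
    and f_d2: "\<And>x. (f' has_real_derivative f'' x) (at x)"
    and f''_cont: "continuous_on UNIV f''"
    and f_bdd: "bounded (range f)" and f'_bdd: "bounded (range f')"
    and f''_bdd: "bounded (range f'')"
    and s_pos: "0 < s" and n_pos: "0 < n" and m_int: "n dvd s"
    and alpha: "doubly_stochastic n \<alpha>"
    and K_sym: "\<And>x. K (- x) = K x"
    and K_int: "integrable lborel K" and K_one: "(LINT x|lborel. K x) = 1"
    and K_sq: "integrable lborel (\<lambda>x. (K x)\<^sup>2)"
    and K_mom2: "integrable lborel (\<lambda>x. x\<^sup>2 * K x)"
  shows "\<exists>C h0. 0 < h0 \<and> (\<forall>h L. 0 < h \<longrightarrow> h < h0 \<longrightarrow> 1 \<le> L \<longrightarrow>
           \<bar>MISE_pros f K s n L \<alpha> h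
              - (MISE_srs f K (n * L) h - Delta_pros f s n \<alpha> / real (n * L))\<bar>
           \<le> C * h\<^sup>2 / real (n * L))"
proof -
  interpret pros_setting f f' f'' s n \<alpha>
    using f_nonneg f_int f_one f_d1 f_d2 f_bdd f'_bdd f''_bdd s_pos n_pos m_int alpha
    by unfold_locales
  obtain C where C: "\<And>h. \<bar>smoothing_defect K h f
      - (\<Sum>j\<in>{1..n}. smoothing_defect K h (pros_dens f s n \<alpha> j)) / real n\<bar> \<le> C * h\<^sup>2"
    by (rule abs_smoothing_defects_le[OF K_sym K_int K_one K_mom2]) blast
  have "\<bar>MISE_pros f K s n L \<alpha> h - (MISE_srs f K (n * L) h - Delta_pros f s n \<alpha> / real (n * L))\<bar>
      \<le> C * h\<^sup>2 / real (n * L)" if "0 < h" "1 \<le> L" for h L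
    unfolding MISE_pros_expansion[OF K_int K_sq that]
    using C[of h] n_pos that by (simp add: abs_divide divide_right_mono)
  then show ?thesis
    by (intro exI[of _ C] exI[of _ 1]) auto
qed

end
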